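(* Let $\rho$ be a Drinfeld $\mathbb{F}_q[t]$-module over $\overline{k}$. If $u_1,\dots,u_n\in\mathbb{C}_\infty$ are linearly independent over $k$, then the functions $f_{u_1}(t),\dots,f_{u_n}(t)$ are linearly independent over $\mathbb{F}_q(t)$.
   Context: $\mathbb{F}_q$ is the field with $q$ elements, $\theta,t$ independent variables, $k=\mathbb{F}_q(\theta)$, $\mathbb{C}_\infty$ the completion of an algebraic closure of $\mathbb{F}_q((1/\theta))$, $\overline{k}$ the algebraic closure of $k$ in $\mathbb{C}_\infty$. $\tau$ is the $q$-power Frobenius; $\rho$ is an $\mathbb{F}_q$-algebra map $\mathbb{F}_q[t]\to\overline{k}[\tau]$ with $\rho_t=\theta+\kappa_1\tau+\dots+\kappa_r\tau^r$, $\kappa_r\ne0$, acting on $\mathbb{C}_\infty$ by $(\sum c_i\tau^i)(x)=\sum c_ix^{q^i}$. $\exp_\rho(z)=z+\sum_{i\ge1}\alpha_iz^{q^i}$ is the unique entire $\mathbb{F}_q$-linear series with $\exp_\rho(\theta z)=\rho_t(\exp_\rho(z))$. For $u\in\mathbb{C}_\infty$, $f_u(t)=\sum_{m\ge0}\exp_\rho(u/\theta^{m+1})t^m=\sum_{i\ge0}\alpha_iu^{q^i}/(\theta^{q^i}-t)$ ($\alpha_0=1$), a power series in $t$ converging on $|t|_\infty\le1$ that extends to a meromorphic function on $\mathbb{C}_\infty$. *)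

theory Defs
  imports "HOL-Computational_Algebra.Polynomial_FPS" "HOL-Computational_Algebra.Formal_Laurent_Series"
begin

text \<open>The finite field F_q inside a field of characteristic p (q a power of p):
  the roots of X^q - X.\<close>
definition dr_Fq :: "nat \<Rightarrow> 'c::field set" where
  "dr_Fq q = {x. x ^ q = x}"

definition dr_k :: "nat \<Rightarrow> 'c::field \<Rightarrow> 'c set" where
  "dr_k q \<theta> = {poly a \<theta> / poly b \<theta> | a b.
      (\<forall>i. coeff a i \<in> dr_Fq q) \<and> (\<forall>i. coeff b i \<in> dr_Fq q) \<and> b \<noteq> 0}"

definition dr_kbar :: "nat \<Rightarrow> 'c::field \<Rightarrow> 'c set" where
  "dr_kbar q \<theta> = {x. \<exists>P. P \<noteq> 0 \<and> (\<forall>i. coeff P i \<in> dr_k q \<theta>) \<and> poly P x = 0}"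

definition dr_absval :: "('c::field \<Rightarrow> real) \<Rightarrow> bool" where
  "dr_absval av \<longleftrightarrow> (\<forall>x. 0 \<le> av x) \<and> (\<forall>x. av x = 0 \<longleftrightarrow> x = 0)
     \<and> (\<forall>x y. av (x * y) = av x * av y) \<and> (\<forall>x y. av (x + y) \<le> max (av x) (av y))"

definition dr_complete :: "('c::field \<Rightarrow> real) \<Rightarrow> bool" where
  "dr_complete av \<longleftrightarrow> (\<forall>X::nat \<Rightarrow> 'c.
      (\<forall>\<epsilon>>0. \<exists>N. \<forall>m\<ge>N. \<forall>n\<ge>N. av (X m - X n) < \<epsilon>) \<longrightarrow>
      (\<exists>L. (\<lambda>n. av (X n - L)) \<longlonglongrightarrow> 0))"

text \<open>(C, av, theta) is a model of C_infinity: C is an algebraically closed field of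
  characteristic p, q = p^e, complete w.r.t. a non-archimedean absolute value av with
  av theta > 1 (so av restricted to k = F_q(theta) is the infinite place), and the
  algebraic closure kbar of k in C is dense in C.  These properties characterise the
  completion of an algebraic closure of F_q((1/theta)) up to isometric isomorphism
  (and normalisation of av).\<close>
definition Cinf_model :: "nat \<Rightarrow> nat \<Rightarrow> nat \<Rightarrow> 'c::field \<Rightarrow> ('c \<Rightarrow> real) \<Rightarrow> bool" where
  "Cinf_model p e q \<theta> av \<longleftrightarrow>
     prime p \<and> 0 < e \<and> q = p ^ e \<and> of_nat p = (0::'c) \<and>
     (\<forall>P::'c poly. 0 < degree P \<longrightarrow> (\<exists>x. poly P x = 0)) \<and>
     dr_absval av \<and> dr_complete av \<and> 1 < av \<theta> \<and>
     (\<forall>x. \<forall>\<epsilon>>0. \<exists>y\<in>dr_kbar q \<theta>. av (x - y) < \<epsilon>)"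

text \<open>Drinfeld module rho_t = theta + kappa_1 tau + ... + kappa_r tau^r over kbar.\<close>
definition drinfeld_data :: "nat \<Rightarrow> 'c::field \<Rightarrow> nat \<Rightarrow> (nat \<Rightarrow> 'c) \<Rightarrow> bool" where
  "drinfeld_data q \<theta> r \<kappa> \<longleftrightarrow> 1 \<le> r \<and> \<kappa> r \<noteq> 0 \<and> (\<forall>j\<in>{1..r}. \<kappa> j \<in> dr_kbar q \<theta>)"

text \<open>Coefficients alpha_i of exp_rho, determined by comparing coefficients of z^(q^i) in
  exp_rho(theta z) = rho_t(exp_rho z):
  alpha_i theta^(q^i) = theta alpha_i + sum_(j=1..min i r) kappa_j alpha_(i-j)^(q^j).\<close>
fun dexp_coeff :: "nat \<Rightarrow> 'c::field \<Rightarrow> nat \<Rightarrow> (nat \<Rightarrow> 'c) \<Rightarrow> nat \<Rightarrow> 'c" where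
  "dexp_coeff q \<theta> r \<kappa> 0 = 1"
| "dexp_coeff q \<theta> r \<kappa> (Suc i) =
     (\<Sum>j\<in>{1..min (Suc i) r}. \<kappa> j * (dexp_coeff q \<theta> r \<kappa> (Suc i - j)) ^ (q ^ j))
       / (\<theta> ^ (q ^ Suc i) - \<theta>)"

definition av_sums :: "('c::field \<Rightarrow> real) \<Rightarrow> (nat \<Rightarrow> 'c) \<Rightarrow> 'c \<Rightarrow> bool" where
  "av_sums av f s \<longleftrightarrow> (\<lambda>N. av (s - (\<Sum>i<N. f i))) \<longlonglongrightarrow> 0"

definition dexp :: "nat \<Rightarrow> 'c::field \<Rightarrow> ('c \<Rightarrow> real) \<Rightarrow> nat \<Rightarrow> (nat \<Rightarrow> 'c) \<Rightarrow> 'c \<Rightarrow> 'c" where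
  "dexp q \<theta> av r \<kappa> z = (THE s. av_sums av (\<lambda>i. dexp_coeff q \<theta> r \<kappa> i * z ^ (q ^ i)) s)"

definition f_u :: "nat \<Rightarrow> 'c::field \<Rightarrow> ('c \<Rightarrow> real) \<Rightarrow> nat \<Rightarrow> (nat \<Rightarrow> 'c) \<Rightarrow> 'c \<Rightarrow> 'c fps" where
  "f_u q \<theta> av r \<kappa> u = Abs_fps (\<lambda>m. dexp q \<theta> av r \<kappa> (u / \<theta> ^ (m + 1)))"

definition dr_Fqt :: "nat \<Rightarrow> 'c::field fls set" where
  "dr_Fqt q = {fps_to_fls (fps_of_poly a) / fps_to_fls (fps_of_poly b) | a b.
      (\<forall>i. coeff a i \<in> dr_Fq q) \<and> (\<forall>i. coeff b i \<in> dr_Fq q) \<and> b \<noteq> 0}"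

end

theory Submission
  imports Defs
begin

text \<open>Clearing denominators turns a relation over \<open>F_q(t)\<close> into
  \<open>\<Sum>_i A_i(t) f_{u_i}(t) = 0\<close> with polynomials \<open>A_i\<close> over \<open>F_q\<close>. For large \<open>m\<close>
  its \<open>t^m\<close>-coefficient is a fixed linear combination of the values
  \<open>exp_\<rho>(u_i / \<theta>^(m-j+1))\<close>. Since \<open>exp_\<rho>(z) = z + O(|z|^q)\<close> near \<open>0\<close>,
  replacing each value by its argument changes the sum by \<open>O(|\<theta>|^(-2m))\<close>, while
  the replaced sum is exactly \<open>W / \<theta>^(m+1)\<close> with \<open>W = \<Sum>_i A_i(\<theta>) u_i\<close>.
  Letting \<open>m \<rightarrow> \<infinity>\<close> forces \<open>W = 0\<close>, a relation over \<open>k\<close>; so every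
  \<open>A_i(\<theta>) = 0\<close>, and then \<open>A_i = 0\<close> because a nonzero polynomial over \<open>F_q\<close>
  has absolute value \<open>|\<theta>|^deg\<close> at \<open>\<theta>\<close>.\<close>

lemma fps_of_poly_mult_nth:
  fixes P :: "'a::comm_semiring_1 poly" and D m :: nat
  assumes "degree P < D" and "D \<le> m"
  shows "(fps_of_poly P * F) $ m = (\<Sum>j<D. coeff P j * F $ (m - j))"
  unfolding fps_mult_nth fps_of_poly_nth using assms
  by (intro sum.mono_neutral_right) (auto simp: coeff_eq_0)

lemma sum_coeff_times_divide_power:
  fixes \<theta> :: "'a::field" and n D m :: nat
  assumes "\<theta> \<noteq> 0" and "\<forall>i<n. degree (A i) < D" and "D \<le> m"
  shows "(\<Sum>i<n. \<Sum>j<D. coeff (A i) j * (u i / \<theta> ^ (m - j + 1)))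
    = (\<Sum>i<n. poly (A i) \<theta> * u i) / \<theta> ^ (m + 1)"
proof -
  have "coeff (A i) j * (u i / \<theta> ^ (m - j + 1)) = coeff (A i) j * \<theta> ^ j * u i / \<theta> ^ (m + 1)"
    if "j < D" for i j
  proof -
    have "\<theta> ^ (m + 1) = \<theta> ^ j * \<theta> ^ (m - j + 1)" using that assms(3) by (simp flip: power_add)
    thus ?thesis using assms(1) by (simp add: field_simps)
  qed
  moreover have "poly (A i) \<theta> = (\<Sum>j<D. coeff (A i) j * \<theta> ^ j)" if "i < n" for i
    unfolding poly_altdef using that assms(2)
    by (intro sum.mono_neutral_left) (auto simp: coeff_eq_0)
  ultimately show ?thesis
    by (simp add: sum_divide_distrib sum_distrib_right)
qed

lemma sum_divide_common_denominator:
  fixes a b F :: "nat \<Rightarrow> 'a::field"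
  assumes "\<forall>i<n. b i \<noteq> 0"
  shows "(\<Sum>i<n. a i / b i * F i)
    = (\<Sum>i<n. a i * (\<Prod>l\<in>{..<n} - {i}. b l) * F i) / (\<Prod>l<n. b l)"
proof -
  have "a i / b i * F i = a i * (\<Prod>l\<in>{..<n} - {i}. b l) * F i / (\<Prod>l<n. b l)" if "i < n" for i
  proof -
    have "(\<Prod>l<n. b l) = b i * (\<Prod>l\<in>{..<n} - {i}. b l)"
      using that by (intro prod.remove) auto
    moreover have "(\<Prod>l\<in>{..<n} - {i}. b l) \<noteq> 0" using assms by simp
    ultimately show ?thesis by simp
  qed
  thus ?thesis by (simp add: sum_divide_distrib)
qed

lemma fps_to_fls_sum: "fps_to_fls (\<Sum>i\<in>S. f i) = (\<Sum>i\<in>S. fps_to_fls (f i))"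
  by (induction S rule: infinite_finite_induct) auto

lemma fps_to_fls_prod: "fps_to_fls (\<Prod>i\<in>S. f i) = (\<Prod>i\<in>S. fps_to_fls (f i))"
  by (induction S rule: infinite_finite_induct) (auto simp: fls_times_fps_to_fls)

lemma one_add_power_diff_mult_le:
  fixes q i j :: nat
  assumes "2 \<le> q" and "1 \<le> j" and "j \<le> i"
  shows "1 + (q ^ (i - j) - 1) * q ^ j \<le> q ^ i - 1"
proof -
  have "q ^ i = q ^ (i - j) * q ^ j" using assms(3) by (simp flip: power_add)
  moreover have "(q ^ (i - j) - 1) * q ^ j = q ^ (i - j) * q ^ j - q ^ j"
    by (simp add: diff_mult_distrib)
  moreover have "q ^ j \<le> q ^ (i - j) * q ^ j" using assms(1) by simp
  moreover have "q \<le> q ^ j" using assms(1,2) by (intro self_le_power) auto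
  ultimately show ?thesis using assms(1) by linarith
qed

locale nonarch_abs =
  fixes av :: "'a::field \<Rightarrow> real"
  assumes absval: "dr_absval av"
begin

lemma nonneg: "0 \<le> av x"
  and eq_0_iff: "av x = 0 \<longleftrightarrow> x = 0"
  and mult: "av (x * y) = av x * av y"
  and add_le: "av (x + y) \<le> max (av x) (av y)"
  using absval unfolding dr_absval_def by auto

lemma zero [simp]: "av 0 = 0"
  by (simp add: eq_0_iff)

lemma one [simp]: "av 1 = 1"
proof -
  have "av 1 = av 1 * av 1" using mult[of 1 1] by simp
  moreover have "av 1 \<noteq> 0" by (simp add: eq_0_iff)
  ultimately show ?thesis by simp
qed

lemma minus [simp]: "av (- x) = av x"
proof -
  have "av (- 1) * av (- 1) = 1" using mult[of "- 1" "- 1"] by simp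
  hence "av (- 1) = 1" using nonneg[of "- 1"] by (simp add: square_eq_1_iff)
  thus ?thesis using mult[of "- 1" x] by simp
qed

lemma diff_commute: "av (x - y) = av (y - x)"
  using minus[of "x - y"] by simp

lemma diff_le: "av (x - y) \<le> max (av x) (av y)"
  using add_le[of x "- y"] by simp

lemma add_le_add: "av (x + y) \<le> av x + av y"
  using add_le[of x y] nonneg[of x] nonneg[of y] by linarith

lemma divide: "av (x / y) = av x / av y"
proof (cases "y = 0")
  case False
  have "av (x / y) * av y = av x" using mult[of "x / y" y] False by simp
  thus ?thesis using False by (simp add: eq_0_iff field_simps)
qed simp

lemma power: "av (x ^ n) = av x ^ n"
  by (induction n) (simp_all add: mult)

lemma add_eq_of_less: "av x < av y \<Longrightarrow> av (x + y) = av y"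
  using add_le[of x y] diff_le[of "x + y" x] by simp

lemma sum_le:
  assumes "\<And>s. s \<in> S \<Longrightarrow> av (f s) \<le> C" and "0 \<le> C"
  shows "av (sum f S) \<le> C"
  using assms(1)
proof (induction S rule: infinite_finite_induct)
  case (insert x F)
  hence "max (av (f x)) (av (sum f F)) \<le> C" by simp
  with add_le have "av (f x + sum f F) \<le> C" by (rule order_trans)
  thus ?case using insert.hyps by simp
qed (use assms(2) in simp_all)

lemma sum_le_sum: "av (sum f S) \<le> (\<Sum>s\<in>S. av (f s))"
  by (induction S rule: infinite_finite_induct)
    (simp_all add: order_trans[OF add_le_add])

lemma Fq_eq_1:
  assumes "2 \<le> q" and "x \<in> dr_Fq q" and "x \<noteq> 0"
  shows "av x = 1"
proof -
  have pos: "0 < av x" using nonneg[of x] eq_0_iff[of x] assms(3) by linarith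
  have "av x * av x ^ (q - 1) = av x * 1"
    using assms(1,2) power[of x q] by (simp add: dr_Fq_def flip: power_Suc)
  hence "av x ^ (q - 1) = 1" using pos by simp
  thus ?thesis using pos assms(1) power_eq_imp_eq_base[of "av x" "q - 1" 1] by simp
qed

lemma poly_Fq:
  assumes "2 \<le> q" and "1 < av \<theta>"
  shows "P \<noteq> 0 \<Longrightarrow> \<forall>i. coeff P i \<in> dr_Fq q \<Longrightarrow> av (poly P \<theta>) = av \<theta> ^ degree P"
proof (induction P rule: pCons_induct)
  case (pCons c P)
  have c: "c \<in> dr_Fq q" using pCons.prems(2)[rule_format, of 0] by simp
  show ?case
  proof (cases "P = 0")
    case True
    thus ?thesis using pCons.hyps c Fq_eq_1[OF assms(1)] by simp
  next
    case False
    have "\<forall>i. coeff P i \<in> dr_Fq q" using pCons.prems(2)[rule_format, of "Suc _"] by simp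
    hence "av (\<theta> * poly P \<theta>) = av \<theta> ^ Suc (degree P)" using pCons.IH False by (simp add: mult)
    moreover have "av c \<le> 1" using c Fq_eq_1[OF assms(1)] by (cases "c = 0") auto
    moreover have "1 < av \<theta> ^ Suc (degree P)" using assms(2) by (rule one_less_power) simp
    ultimately show ?thesis using False add_eq_of_less[of c] by simp
  qed
qed simp

lemma sums_unique:
  assumes "av_sums av f s" and "av_sums av f s'"
  shows "s = s'"
proof -
  have "(\<lambda>N. av (s - (\<Sum>i<N. f i)) + av (s' - (\<Sum>i<N. f i))) \<longlonglongrightarrow> 0 + 0"
    using assms unfolding av_sums_def by (intro tendsto_add)
  moreover have "av (s - s') \<le> av (s - (\<Sum>i<N. f i)) + av (s' - (\<Sum>i<N. f i))" for N
    using add_le_add[of "s - (\<Sum>i<N. f i)" "(\<Sum>i<N. f i) - s'"] diff_commute[of s'] by simp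
  ultimately have "av (s - s') \<le> 0" by (intro LIMSEQ_le_const[of _ 0]) auto
  thus ?thesis using nonneg[of "s - s'"] eq_0_iff[of "s - s'"] by simp
qed

lemma sums_exists:
  assumes "dr_complete av" and "0 \<le> y" and "y < 1" and "\<And>i. av (f i) \<le> y ^ i"
  shows "\<exists>s. av_sums av f s"
proof -
  define S where "S N = (\<Sum>i<N. f i)" for N
  have tail: "av (S m - S n) \<le> y ^ n" if "n \<le> m" for m n
  proof -
    have "S m - S n = sum f {n..<m}"
      unfolding S_def using sum.atLeastLessThan_concat[OF le0 that, of f]
      by (simp add: lessThan_atLeast0 algebra_simps)
    moreover have "av (sum f {n..<m}) \<le> y ^ n"
    proof (rule sum_le)
      fix i assume "i \<in> {n..<m}"
      thus "av (f i) \<le> y ^ n"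
        using assms(4)[of i] power_decreasing[of n i y] assms(2,3) by fastforce
    qed (use assms(2) in simp)
    ultimately show ?thesis by simp
  qed
  have "av (S m - S n) < \<epsilon>" if "0 < \<epsilon>" "y ^ N < \<epsilon>" "N \<le> m" "N \<le> n" for \<epsilon> N m n
  proof -
    have "av (S m - S n) \<le> y ^ min m n"
      using tail[of m n] tail[of n m] diff_commute[of "S m"] by (cases "n \<le> m") (simp_all add: min_def)
    also have "\<dots> \<le> y ^ N" using that assms(2,3) by (intro power_decreasing) auto
    finally show ?thesis using that(2) by simp
  qed
  hence "\<forall>\<epsilon>>0. \<exists>N. \<forall>m\<ge>N. \<forall>n\<ge>N. av (S m - S n) < \<epsilon>"
    using real_arch_pow_inv[OF _ assms(3)] by meson
  then obtain s where "(\<lambda>N. av (S N - s)) \<longlonglongrightarrow> 0"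
    using assms(1) unfolding dr_complete_def by blast
  hence "av_sums av f s" unfolding av_sums_def S_def by (simp add: diff_commute)
  thus ?thesis ..
qed

lemma sums_diff_first_le:
  assumes "av_sums av f s" and "\<And>i. 1 \<le> i \<Longrightarrow> av (f i) \<le> B" and "0 \<le> B"
  shows "av (s - f 0) \<le> B"
proof -
  define S where "S N = (\<Sum>i<N. f i)" for N
  have "av (s - f 0) \<le> max (av (s - S (Suc N))) B" for N
  proof -
    have "S (Suc N) - f 0 = (\<Sum>i<N. f (Suc i))" unfolding S_def by (subst sum.lessThan_Suc_shift) simp
    moreover have "av (\<Sum>i<N. f (Suc i)) \<le> B" using assms(2,3) by (intro sum_le) auto
    ultimately have "av (S (Suc N) - f 0) \<le> B" by simp
    thus ?thesis using add_le[of "s - S (Suc N)" "S (Suc N) - f 0"] by simp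
  qed
  moreover have "(\<lambda>N. av (s - S N)) \<longlonglongrightarrow> 0"
    using assms(1) unfolding av_sums_def S_def .
  hence "(\<lambda>N. max (av (s - S (Suc N))) B) \<longlonglongrightarrow> max 0 B"
    by (intro tendsto_max tendsto_const) (rule LIMSEQ_Suc)
  ultimately have "av (s - f 0) \<le> max 0 B"
    by (intro LIMSEQ_le_const[of "\<lambda>N. max (av (s - S (Suc N))) B"]) auto
  thus ?thesis using assms(3) by simp
qed

end

locale drinfeld_exp = nonarch_abs av for av :: "'a::field \<Rightarrow> real" +
  fixes q :: nat and \<theta> :: 'a and r :: nat and \<kappa> :: "nat \<Rightarrow> 'a" and M :: real
  assumes complete: "dr_complete av"
    and theta_gt_1: "1 < av \<theta>"
    and q_ge_2: "2 \<le> q"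
    and M_ge_1: "1 \<le> M"
    and kappa_le_M: "\<And>j. j \<in> {1..r} \<Longrightarrow> av (\<kappa> j) \<le> M"
begin

lemma denominator_ge_1:
  assumes "2 \<le> N" shows "1 \<le> av (\<theta> ^ N - \<theta>)"
proof -
  have "av \<theta> ^ 1 < av \<theta> ^ N" using theta_gt_1 assms by (intro power_strict_increasing) auto
  hence "av (- \<theta> + \<theta> ^ N) = av \<theta> ^ N" using add_eq_of_less[of "- \<theta>"] by (simp add: power)
  thus ?thesis using \<open>av \<theta> ^ 1 < av \<theta> ^ N\<close> theta_gt_1 by simp
qed

lemma poly_Fq_eq_0_iff:
  assumes "\<forall>i. coeff P i \<in> dr_Fq q"
  shows "poly P \<theta> = 0 \<longleftrightarrow> P = 0"
  using poly_Fq[OF q_ge_2 theta_gt_1 _ assms] theta_gt_1 eq_0_iff[of "poly P \<theta>"] by force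

lemma dexp_coeff_le: "av (dexp_coeff q \<theta> r \<kappa> i) \<le> M ^ (q ^ i - 1)"
proof (induction i rule: less_induct)
  case (less i)
  show ?case
  proof (cases i)
    case (Suc k)
    have term_le: "av (\<kappa> j * dexp_coeff q \<theta> r \<kappa> (Suc k - j) ^ q ^ j) \<le> M ^ (q ^ Suc k - 1)"
      if j: "j \<in> {1..min (Suc k) r}" for j
    proof -
      have "av (\<kappa> j * dexp_coeff q \<theta> r \<kappa> (Suc k - j) ^ q ^ j)
            = av (\<kappa> j) * av (dexp_coeff q \<theta> r \<kappa> (Suc k - j)) ^ q ^ j"
        by (simp add: mult power)
      also have "\<dots> \<le> M * (M ^ (q ^ (Suc k - j) - 1)) ^ q ^ j"
        using j Suc less[of "Suc k - j"] kappa_le_M[of j] M_ge_1 nonneg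
        by (intro mult_mono power_mono) auto
      also have "\<dots> = M ^ (1 + (q ^ (Suc k - j) - 1) * q ^ j)" by (simp add: power_mult)
      also have "\<dots> \<le> M ^ (q ^ Suc k - 1)"
        using j q_ge_2 M_ge_1 by (intro power_increasing one_add_power_diff_mult_le) auto
      finally show ?thesis .
    qed
    have "2 \<le> q ^ Suc k" using q_ge_2 self_le_power[of q "Suc k"] by linarith
    hence "1 \<le> av (\<theta> ^ q ^ Suc k - \<theta>)" by (rule denominator_ge_1)
    moreover have "av (\<Sum>j\<in>{1..min (Suc k) r}. \<kappa> j * dexp_coeff q \<theta> r \<kappa> (Suc k - j) ^ q ^ j)
        \<le> M ^ (q ^ Suc k - 1)" (is "av ?S \<le> _")
      using term_le M_ge_1 by (intro sum_le) auto
    moreover have "av ?S / av (\<theta> ^ q ^ Suc k - \<theta>) \<le> av ?S / 1"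
      using calculation(1) nonneg[of ?S] by (intro divide_left_mono) auto
    ultimately have "av ?S / av (\<theta> ^ q ^ Suc k - \<theta>) \<le> M ^ (q ^ Suc k - 1)" by simp
    thus ?thesis using Suc by (simp add: divide)
  qed simp
qed

lemma dexp_term_le: "av (dexp_coeff q \<theta> r \<kappa> i * z ^ q ^ i) \<le> (M * av z) ^ q ^ i"
proof -
  have "av (dexp_coeff q \<theta> r \<kappa> i * z ^ q ^ i) \<le> M ^ (q ^ i - 1) * av z ^ q ^ i"
    using dexp_coeff_le[of i] nonneg by (simp add: mult power mult_right_mono)
  also have "\<dots> \<le> M ^ q ^ i * av z ^ q ^ i"
    using M_ge_1 nonneg by (intro mult_right_mono power_increasing) auto
  finally show ?thesis by (simp add: power_mult_distrib)
qed

lemma dexp_sums: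
  assumes "M * av z < 1"
  shows "av_sums av (\<lambda>i. dexp_coeff q \<theta> r \<kappa> i * z ^ q ^ i) (dexp q \<theta> av r \<kappa> z)"
proof -
  have y: "0 \<le> M * av z" using M_ge_1 nonneg[of z] by simp
  have "i \<le> q ^ i" for i
    using less_exp[of i] power_mono[OF q_ge_2, of i] by linarith
  hence "av (dexp_coeff q \<theta> r \<kappa> i * z ^ q ^ i) \<le> (M * av z) ^ i" for i
    using y assms by (intro order_trans[OF dexp_term_le power_decreasing]) auto
  hence "\<exists>s. av_sums av (\<lambda>i. dexp_coeff q \<theta> r \<kappa> i * z ^ q ^ i) s"
    by (rule sums_exists[OF complete y assms])
  then obtain s where s: "av_sums av (\<lambda>i. dexp_coeff q \<theta> r \<kappa> i * z ^ q ^ i) s" ..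
  moreover have "dexp q \<theta> av r \<kappa> z = s"
    unfolding dexp_def using s sums_unique[OF _ s] by blast
  ultimately show ?thesis by simp
qed

lemma dexp_diff_le:
  assumes "M * av z < 1"
  shows "av (z - dexp q \<theta> av r \<kappa> z) \<le> (M * av z) ^ 2"
proof -
  have y: "0 \<le> M * av z" using M_ge_1 nonneg[of z] by simp
  have "2 \<le> q ^ i" if "1 \<le> i" for i
    using q_ge_2 self_le_power[of q i] that by linarith
  hence "av (dexp_coeff q \<theta> r \<kappa> i * z ^ q ^ i) \<le> (M * av z) ^ 2" if "1 \<le> i" for i
    using that y assms by (intro order_trans[OF dexp_term_le power_decreasing]) auto
  from sums_diff_first_le[OF dexp_sums[OF assms] this] show ?thesis
    using y by (simp add: diff_commute)
qed

lemma dexp_relation_imp_eval_zero: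
  fixes n D :: nat
  assumes deg: "\<forall>i<n. degree (A i) < D"
    and rel: "\<forall>m\<ge>D. (\<Sum>i<n. \<Sum>j<D. coeff (A i) j * dexp q \<theta> av r \<kappa> (u i / \<theta> ^ (m - j + 1))) = 0"
  shows "(\<Sum>i<n. poly (A i) \<theta> * u i) = 0"
proof -
  define W where "W = (\<Sum>i<n. poly (A i) \<theta> * u i)"
  define x where "x m = (1 / av \<theta>) ^ Suc m" for m
  define z where "z m i j = u i / \<theta> ^ (m - j + 1)" for m i j
  define C where "C = (\<Sum>i<n. \<Sum>j<D. av (coeff (A i) j) * (M * av (u i) * av \<theta> ^ j) ^ 2)"
  have \<theta>: "\<theta> \<noteq> 0" using theta_gt_1 by auto
  have x_pos: "0 < x m" for m unfolding x_def using theta_gt_1 by simp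
  have x_lim: "x \<longlonglongrightarrow> 0"
    unfolding x_def using theta_gt_1 by (intro LIMSEQ_Suc[OF LIMSEQ_power_zero]) simp
  have av_z: "av (z m i j) = av (u i) * av \<theta> ^ j * x m" if "j \<le> m" for m i j
  proof -
    have "av \<theta> ^ Suc m = av \<theta> ^ j * av \<theta> ^ (m - j + 1)" using that by (simp flip: power_add)
    thus ?thesis using theta_gt_1 by (simp add: z_def x_def divide power mult field_simps)
  qed
  have "\<forall>i\<in>{..<n}. \<forall>j\<in>{..<D}. \<forall>\<^sub>F m in sequentially. j \<le> m \<and> M * av (z m i j) < 1"
  proof (intro ballI)
    fix i j
    have "(\<lambda>m. M * av (u i) * av \<theta> ^ j * x m) \<longlonglongrightarrow> 0"
      using tendsto_mult_right_zero[OF x_lim] .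
    hence "\<forall>\<^sub>F m in sequentially. M * av (u i) * av \<theta> ^ j * x m < 1"
      by (rule order_tendstoD) simp
    thus "\<forall>\<^sub>F m in sequentially. j \<le> m \<and> M * av (z m i j) < 1"
      using eventually_ge_at_top[of j] by eventually_elim (simp add: av_z mult.assoc)
  qed
  hence small: "\<forall>\<^sub>F m in sequentially. \<forall>i\<in>{..<n}. \<forall>j\<in>{..<D}. j \<le> m \<and> M * av (z m i j) < 1"
    by (simp add: eventually_ball_finite_distrib)
  have bound: "av W * x m \<le> C * x m ^ 2"
    if m: "D \<le> m" "\<forall>i\<in>{..<n}. \<forall>j\<in>{..<D}. j \<le> m \<and> M * av (z m i j) < 1" for m
  proof -
    have "av W * x m = av (W / \<theta> ^ (m + 1))"
      by (simp add: x_def divide power mult power_one_over)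
    also have "W / \<theta> ^ (m + 1)
        = (\<Sum>i<n. \<Sum>j<D. coeff (A i) j * (z m i j - dexp q \<theta> av r \<kappa> (z m i j)))"
      using sum_coeff_times_divide_power[OF \<theta> deg m(1), of u] rel m(1)
      by (simp add: W_def z_def algebra_simps sum_subtractf)
    also have "av \<dots> \<le> (\<Sum>i<n. av (\<Sum>j<D. coeff (A i) j * (z m i j - dexp q \<theta> av r \<kappa> (z m i j))))"
      by (rule sum_le_sum)
    also have "\<dots> \<le> (\<Sum>i<n. \<Sum>j<D. av (coeff (A i) j * (z m i j - dexp q \<theta> av r \<kappa> (z m i j))))"
      by (intro sum_mono sum_le_sum)
    also have "\<dots> \<le> (\<Sum>i<n. \<Sum>j<D. av (coeff (A i) j) * (M * av (z m i j)) ^ 2)"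
      using m(2) by (intro sum_mono) (auto simp: mult intro!: mult_left_mono dexp_diff_le nonneg)
    also have "\<dots> = C * x m ^ 2"
      unfolding C_def sum_distrib_right using m(2)
      by (intro sum.cong refl) (simp add: av_z power_mult_distrib)
    finally show ?thesis .
  qed
  from small eventually_ge_at_top[of D] have "\<forall>\<^sub>F m in sequentially. av W \<le> C * x m"
  proof eventually_elim
    case (elim m)
    thus ?case using bound[of m] x_pos[of m] by (simp add: power2_eq_square)
  qed
  hence "av W \<le> 0"
    using tendsto_le[OF trivial_limit_sequentially tendsto_mult_right_zero[OF x_lim] tendsto_const] by simp
  thus ?thesis using nonneg[of W] eq_0_iff[of W] unfolding W_def by simp
qed

lemma fps_relation_imp_eval_zero:
  fixes n :: nat
  assumes "(\<Sum>i<n. fps_of_poly (A i) * f_u q \<theta> av r \<kappa> (u i)) = 0"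
  shows "(\<Sum>i<n. poly (A i) \<theta> * u i) = 0"
proof -
  define D where "D = Suc (\<Sum>i<n. degree (A i))"
  have deg: "\<forall>i<n. degree (A i) < D"
    unfolding D_def by (auto intro: le_imp_less_Suc member_le_sum)
  have "(\<Sum>i<n. \<Sum>j<D. coeff (A i) j * dexp q \<theta> av r \<kappa> (u i / \<theta> ^ (m - j + 1))) = 0"
    if "D \<le> m" for m
  proof -
    have "0 = (\<Sum>i<n. fps_of_poly (A i) * f_u q \<theta> av r \<kappa> (u i)) $ m" using assms by simp
    also have "\<dots> = (\<Sum>i<n. \<Sum>j<D. coeff (A i) j * f_u q \<theta> av r \<kappa> (u i) $ (m - j))"
      unfolding fps_sum_nth using deg that by (intro sum.cong refl fps_of_poly_mult_nth) auto
    also have "\<dots> = (\<Sum>i<n. \<Sum>j<D. coeff (A i) j * dexp q \<theta> av r \<kappa> (u i / \<theta> ^ (m - j + 1)))"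
      by (simp add: f_u_def)
    finally show ?thesis by simp
  qed
  thus ?thesis using dexp_relation_imp_eval_zero[OF deg] by blast
qed

lemma Fqt_relation_imp_k_relation:
  fixes n :: nat
  assumes ab: "\<And>i. i < n \<Longrightarrow> c i = fps_to_fls (fps_of_poly (a i)) / fps_to_fls (fps_of_poly (b i))"
    and b: "\<And>i. i < n \<Longrightarrow> (\<forall>j. coeff (b i) j \<in> dr_Fq q) \<and> b i \<noteq> 0"
    and rel: "(\<Sum>i<n. c i * fps_to_fls (f_u q \<theta> av r \<kappa> (u i))) = 0"
  shows "(\<Sum>i<n. poly (a i) \<theta> / poly (b i) \<theta> * u i) = 0"
proof -
  define A where "A i = a i * (\<Prod>l\<in>{..<n} - {i}. b l)" for i
  have "(\<Sum>i<n. c i * fps_to_fls (f_u q \<theta> av r \<kappa> (u i)))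
      = fps_to_fls (\<Sum>i<n. fps_of_poly (A i) * f_u q \<theta> av r \<kappa> (u i))
        / fps_to_fls (fps_of_poly (\<Prod>l<n. b l))"
    using ab b sum_divide_common_denominator[of n "\<lambda>i. fps_to_fls (fps_of_poly (b i))"]
    by (simp add: A_def fps_to_fls_sum fps_to_fls_prod fps_of_poly_prod fps_of_poly_mult
        fls_times_fps_to_fls)
  hence "(\<Sum>i<n. fps_of_poly (A i) * f_u q \<theta> av r \<kappa> (u i)) = 0"
    using rel b by (simp add: fps_of_poly_prod prod_zero_iff)
  hence "(\<Sum>i<n. poly (A i) \<theta> * u i) = 0" by (rule fps_relation_imp_eval_zero)
  moreover have "poly (b i) \<theta> \<noteq> 0" if "i < n" for i
    using b[OF that] poly_Fq_eq_0_iff by blast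
  ultimately show ?thesis
    using sum_divide_common_denominator[of n "\<lambda>i. poly (b i) \<theta>"]
    by (simp add: A_def poly_prod)
qed

end

lemma drinfeld_exp_if_Cinf_model:
  assumes "Cinf_model p e q \<theta> av"
  shows "drinfeld_exp av q \<theta> r \<kappa> (1 + (\<Sum>j\<in>{1..r}. av (\<kappa> j)))"
proof
  have model: "prime p" "0 < e" "q = p ^ e"
    using assms unfolding Cinf_model_def by auto
  show "2 \<le> q"
    using prime_ge_2_nat[OF model(1)] self_le_power[of p e] model(2,3) by simp
  have nonneg: "0 \<le> av x" for x
    using assms unfolding Cinf_model_def dr_absval_def by auto
  show "av (\<kappa> j) \<le> 1 + (\<Sum>j\<in>{1..r}. av (\<kappa> j))" if "j \<in> {1..r}" for j
    using member_le_sum[OF that, of "\<lambda>j. av (\<kappa> j)"] nonneg by simp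
  show "1 \<le> 1 + (\<Sum>j\<in>{1..r}. av (\<kappa> j))" using nonneg by (simp add: sum_nonneg)
qed (use assms in \<open>simp_all add: Cinf_model_def\<close>)

lemma obtain_dr_Fqt_fractions:
  fixes c :: "nat \<Rightarrow> 'a::field fls"
  assumes "\<forall>i<n. c i \<in> dr_Fqt q"
  obtains a b where "\<And>i. i < n \<Longrightarrow> c i = fps_to_fls (fps_of_poly (a i)) / fps_to_fls (fps_of_poly (b i))"
    and "\<And>i. i < n \<Longrightarrow> \<forall>j. coeff (a i) j \<in> dr_Fq q"
    and "\<And>i. i < n \<Longrightarrow> (\<forall>j. coeff (b i) j \<in> dr_Fq q) \<and> b i \<noteq> 0"
proof -
  have "\<forall>i\<in>{..<n}. \<exists>a b. c i = fps_to_fls (fps_of_poly a) / fps_to_fls (fps_of_poly b)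
      \<and> (\<forall>j. coeff a j \<in> dr_Fq q) \<and> (\<forall>j. coeff b j \<in> dr_Fq q) \<and> b \<noteq> 0"
    using assms unfolding dr_Fqt_def by blast
  thus thesis using that by (metis lessThan_iff bchoice)
qed

theorem lemma3p5:
  fixes p e q r n :: nat and \<theta> :: "'c::field" and av :: "'c \<Rightarrow> real"
    and \<kappa> :: "nat \<Rightarrow> 'c" and u :: "nat \<Rightarrow> 'c"
  assumes "Cinf_model p e q \<theta> av"
    and "drinfeld_data q \<theta> r \<kappa>"
    and "\<forall>c::nat \<Rightarrow> 'c. (\<forall>i<n. c i \<in> dr_k q \<theta>) \<and> (\<Sum>i<n. c i * u i) = 0
           \<longrightarrow> (\<forall>i<n. c i = 0)"
  shows "\<forall>c::nat \<Rightarrow> 'c fls. (\<forall>i<n. c i \<in> dr_Fqt q)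
           \<and> (\<Sum>i<n. c i * fps_to_fls (f_u q \<theta> av r \<kappa> (u i))) = 0
           \<longrightarrow> (\<forall>i<n. c i = 0)"
proof (rule allI, rule impI, elim conjE)
  fix c :: "nat \<Rightarrow> 'c fls"
  assume c: "\<forall>i<n. c i \<in> dr_Fqt q"
    and rel: "(\<Sum>i<n. c i * fps_to_fls (f_u q \<theta> av r \<kappa> (u i))) = 0"
  obtain a b
    where ab: "\<And>i. i < n \<Longrightarrow> c i = fps_to_fls (fps_of_poly (a i)) / fps_to_fls (fps_of_poly (b i))"
      and a: "\<And>i. i < n \<Longrightarrow> \<forall>j. coeff (a i) j \<in> dr_Fq q"
      and b: "\<And>i. i < n \<Longrightarrow> (\<forall>j. coeff (b i) j \<in> dr_Fq q) \<and> b i \<noteq> 0"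
    using obtain_dr_Fqt_fractions[OF c] by blast
  interpret drinfeld_exp av q \<theta> r \<kappa> "1 + (\<Sum>j\<in>{1..r}. av (\<kappa> j))"
    using assms(1) by (rule drinfeld_exp_if_Cinf_model)
  have "(\<Sum>i<n. poly (a i) \<theta> / poly (b i) \<theta> * u i) = 0"
    using ab b rel by (rule Fqt_relation_imp_k_relation)
  moreover have "\<forall>i<n. poly (a i) \<theta> / poly (b i) \<theta> \<in> dr_k q \<theta>"
    using a b unfolding dr_k_def by blast
  ultimately have "\<forall>i<n. poly (a i) \<theta> / poly (b i) \<theta> = 0"
    using assms(3)[rule_format, of "\<lambda>i. poly (a i) \<theta> / poly (b i) \<theta>"] by blast
  thus "\<forall>i<n. c i = 0"
    using ab a b poly_Fq_eq_0_iff by auto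
qed

end
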